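(* For every $n\in\mathbb{N}$, $4^{-n}\det[D^{(1)}_{i+j}]_{0\le i,j\le n}$ is a positive odd integer.
   Context: For $m\in\mathbb{N}$, $D^{(1)}_m=\sum_{k=0}^m\binom{m}{k}\binom{2k}{k}\binom{2(m-k)}{m-k}$. $\det[a_{i+j}]_{0\le i,j\le n}$ denotes the determinant of the $(n+1)\times(n+1)$ Hankel matrix with $(i,j)$-entry $a_{i+j}$. *)

theory Defs
  imports "Jordan_Normal_Form.Determinant"
begin

definition D1 :: "nat \<Rightarrow> int" where
  "D1 m = (\<Sum>k=0..m. int (m choose k) * int ((2*k) choose k) * int ((2*(m-k)) choose (m-k)))"

definition hankel :: "(nat \<Rightarrow> int) \<Rightarrow> nat \<Rightarrow> int mat" where
  "hankel a n = mat (Suc n) (Suc n) (\<lambda>(i,j). a (i+j))"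

end

theory Submission
  imports Defs
begin

(*
  For m \<ge> 1 the two end terms of D1 m are C(2m, m) = 2 C(2m - 1, m - 1), and all other
  summands are divisible by 4 because C(2k, k) is even for k \<ge> 1. After division by 4 the
  inner terms cancel modulo 2 in pairs k, m - k (the middle one is even), so D1 m / 4 is odd
  exactly when C(2m - 1, m - 1) is, i.e. when m is a power of two.
  Taking a factor 2 out of every row and column but the first, the Hankel determinant becomes
  4^n times the determinant of an integer matrix that is odd at (i, j) iff i = j = 0 or
  i, j \<ge> 1 and i + j is a power of two. Exactly one permutation p of {1..n} makes every
  i + p i a power of two (the numbers 2^(a+1) - n, ..., n are forced to pair up, where
  2^a \<le> n < 2^(a+1), and one recurses on the rest), so that determinant is odd.

  Positivity: for N > m, N^2 D1 m = \<Sum>j,l<N (t j + t l)^m with t j = |1 + \<omega>^j|^2 and \<omega> a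
  primitive N-th root of unity, so the quadratic forms of the Hankel matrices of D1 are
  positive semidefinite. Evaluating the form at the last column of the adjugate shows that
  consecutive Hankel determinants cannot have opposite signs; as none of them vanishes,
  all are positive.
*)

section \<open>Parity of binomial coefficients and of D1\<close>

definition is_pow2 :: "nat \<Rightarrow> bool" where
  "is_pow2 x \<longleftrightarrow> (\<exists>k. x = 2 ^ k)"

lemma is_pow2_double_iff: "is_pow2 (2 * t) \<longleftrightarrow> is_pow2 t"
proof
  assume "is_pow2 (2 * t)"
  then obtain k where k: "2 * t = 2 ^ k" by (auto simp: is_pow2_def)
  then have "k \<noteq> 0" by (metis odd_one power_0 dvd_triv_left)
  then show "is_pow2 t" using k by (auto simp: is_pow2_def gr0_conv_Suc)
qed (auto simp: is_pow2_def intro: exI[of _ "Suc _"])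

lemma not_is_pow2_odd: "t \<noteq> 0 \<Longrightarrow> \<not> is_pow2 (2 * t + 1)"
proof
  assume "t \<noteq> 0" "is_pow2 (2 * t + 1)"
  then obtain k where k: "2 * t + 1 = 2 ^ k" by (auto simp: is_pow2_def)
  with \<open>t \<noteq> 0\<close> have "k \<noteq> 0" by (cases k) auto
  with k have "even (2 * t + 1)" by simp
  then show False by simp
qed

lemma choose_double_parity:
  "even ((2 * a) choose (2 * b + 1)) \<and> (even ((2 * a) choose (2 * b)) \<longleftrightarrow> even (a choose b))"
proof (induction a arbitrary: b)
  case 0
  then show ?case by (cases b) auto
next
  case (Suc a)
  show ?case
  proof (cases b)
    case (Suc b')
    have "(2 * Suc a) choose (2 * b + 1)
        = ((2 * a) choose (2 * b + 1)) + 2 * ((2 * a) choose (2 * b)) + ((2 * a) choose (2 * b' + 1))"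
      and "(2 * Suc a) choose (2 * b)
        = ((2 * a) choose (2 * b)) + 2 * ((2 * a) choose (2 * b' + 1)) + ((2 * a) choose (2 * b'))"
      by (simp_all add: Suc numeral_2_eq_2)
    then show ?thesis using Suc.IH[of b] Suc.IH[of b'] by (simp add: Suc)
  qed simp
qed

lemma odd_choose_double_Suc_iff: "odd ((2 * a + 1) choose (2 * b + 1)) \<longleftrightarrow> odd (a choose b)"
  using choose_double_parity[of a b] by simp

lemma central_binomial_Suc: "(2 * Suc k) choose Suc k = 2 * ((2 * k + 1) choose k)"
  using binomial_symmetric[of k "2 * k + 1"] by simp

lemma odd_choose_half_iff: "odd ((2 * k + 1) choose k) \<longleftrightarrow> is_pow2 (Suc k)"
proof (induction k rule: less_induct)
  case (less k)
  consider "k = 0" | s where "k = 2 * s + 1" | t where "t \<noteq> 0" "k = 2 * t"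
    by (metis oddE evenE mult_0_right)
  then show ?case
  proof cases
    case 1
    then show ?thesis by (simp add: is_pow2_def exI[of _ 0])
  next
    case (2 s)
    have "(2 * k + 1) choose k = (2 * (2 * s + 1) + 1) choose (2 * s + 1)"
      using 2 by (simp add: algebra_simps)
    then have "odd ((2 * k + 1) choose k) \<longleftrightarrow> odd ((2 * s + 1) choose s)"
      by (simp only: odd_choose_double_Suc_iff)
    also have "\<dots> \<longleftrightarrow> is_pow2 (Suc s)"
      using 2 by (intro less.IH) simp
    finally show ?thesis using 2 is_pow2_double_iff[of "Suc s"] by simp
  next
    case (3 t)
    have "(2 * k + 1) choose k = (2 * (2 * t) + 1) choose (2 * t + 1)"
      using 3 binomial_symmetric[of "2 * t" "2 * (2 * t) + 1"] by simp
    then have "odd ((2 * k + 1) choose k) \<longleftrightarrow> odd ((2 * t) choose t)"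
      by (simp only: odd_choose_double_Suc_iff)
    moreover have "even ((2 * t) choose t)"
      using 3 central_binomial_Suc[of "t - 1"] by simp
    ultimately show ?thesis
      using 3 not_is_pow2_odd[of t] by simp
  qed
qed

lemma even_sum_symmetric:
  fixes g :: "nat \<Rightarrow> nat"
  assumes sym: "\<And>k. 0 < k \<Longrightarrow> k < m \<Longrightarrow> g (m - k) = g k"
    and mid: "\<And>k. 2 * k = m \<Longrightarrow> even (g k)"
  shows "even (\<Sum>k\<in>{1..<m}. g k)"
proof -
  define L where "L = {k\<in>{1..<m}. 2 * k < m}"
  define U where "U = {k\<in>{1..<m}. 2 * k > m}"
  define C where "C = {k\<in>{1..<m}. 2 * k = m}"
  have "{1..<m} = L \<union> (U \<union> C)" by (auto simp: L_def U_def C_def)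
  then have "sum g {1..<m} = sum g (L \<union> (U \<union> C))" by (rule arg_cong)
  also have "\<dots> = sum g L + sum g (U \<union> C)"
    by (rule sum.union_disjoint) (auto simp: L_def U_def C_def)
  also have "sum g (U \<union> C) = sum g U + sum g C"
    by (rule sum.union_disjoint) (auto simp: U_def C_def)
  finally have "sum g {1..<m} = sum g L + (sum g U + sum g C)" .
  moreover have "sum g U = sum (\<lambda>k. g (m - k)) L"
    by (rule sum.reindex_bij_witness[of _ "\<lambda>k. m - k" "\<lambda>k. m - k"]) (auto simp: L_def U_def)
  moreover have "\<dots> = sum g L" by (rule sum.cong) (auto simp: L_def sym)
  moreover have "even (sum g C)"
    by (rule dvd_sum) (auto simp: C_def mid)
  ultimately show ?thesis by simp
qed

lemma D1_quarter_parity: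
  assumes "m \<noteq> 0"
  obtains e where "D1 m = 4 * int e" and "odd e \<longleftrightarrow> is_pow2 m"
proof -
  define h where "h k = (2 * k + 1) choose k" for k
  have central: "(2 * k) choose k = 2 * h (k - 1)" if "k \<noteq> 0" for k
    using that central_binomial_Suc[of "k - 1"] by (simp add: h_def)
  define f where "f k = int (m choose k) * int ((2 * k) choose k) * int ((2 * (m - k)) choose (m - k))" for k
  define g where "g k = (m choose k) * h (k - 1) * h (m - k - 1)" for k
  define e where "e = h (m - 1) + (\<Sum>k\<in>{1..<m}. g k)"
  have "{0..m} = insert 0 (insert m {1..<m})" using assms by auto
  then have "D1 m = f 0 + (f m + sum f {1..<m})"
    unfolding D1_def f_def[symmetric] using assms by simp
  moreover have "f 0 = 2 * int (h (m - 1))" "f m = 2 * int (h (m - 1))"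
    using central[OF assms] by (simp_all add: f_def)
  moreover have "f k = 4 * int (g k)" if "k \<in> {1..<m}" for k
    using that central[of k] central[of "m - k"] by (simp add: f_def g_def)
  ultimately have "D1 m = 4 * int e"
    by (simp add: e_def sum_distrib_left)
  moreover have "even (\<Sum>k\<in>{1..<m}. g k)"
  proof (rule even_sum_symmetric)
    fix k assume "0 < k" "k < m"
    then show "g (m - k) = g k"
      by (simp add: g_def binomial_symmetric[of k m, symmetric])
  next
    fix k assume "2 * k = m"
    then show "even (g k)" using central[of k] assms by (simp add: g_def)
  qed
  moreover have "odd (h (m - 1)) \<longleftrightarrow> is_pow2 m"
    using assms odd_choose_half_iff[of "m - 1"] by (simp add: h_def)
  ultimately show ?thesis by (intro that[of e]) (simp_all add: e_def)
qed

section \<open>Pairing numbers to powers of two\<close>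

definition pow2_pairing :: "nat \<Rightarrow> (nat \<Rightarrow> nat) \<Rightarrow> bool" where
  "pow2_pairing n p \<longleftrightarrow> bij_betw p {1..n} {1..n} \<and> (\<forall>i\<in>{1..n}. is_pow2 (i + p i))"

lemma is_pow2_eqI:
  assumes "is_pow2 x" "is_pow2 y" "x < 2 * y" "y < 2 * x"
  shows "x = y"
proof -
  obtain k l where kl: "x = 2 ^ k" "y = 2 ^ l" using assms(1,2) by (auto simp: is_pow2_def)
  with assms(3,4) have "(2::nat) ^ k < 2 ^ Suc l" "(2::nat) ^ l < 2 ^ Suc k" by simp_all
  then have "k < Suc l" "l < Suc k"
    by (metis power_less_imp_less_exp one_less_numeral_iff semiring_norm(76))+
  then show ?thesis using kl by simp
qed

lemma pow2_block:
  assumes "n \<noteq> 0"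
  obtains s where "is_pow2 s" "s \<le> 2 * n" "n < s"
proof -
  obtain a where "2 ^ a \<le> n" "n < 2 ^ (a + 1)" using ex_power_ivl1[of 2 n] assms by auto
  moreover have "is_pow2 (2 ^ (a + 1))" unfolding is_pow2_def by blast
  ultimately show ?thesis by (intro that[of "2 ^ (a + 1)"]) auto
qed

context
  fixes n s :: nat
  assumes s: "is_pow2 s" "s \<le> 2 * n" "n < s"
begin

text \<open>Every \<open>i \<in> [s - n, n]\<close> must be paired with \<open>s - i\<close>: if \<open>2 i \<ge> s\<close>, the power
  of two \<open>i + p i\<close> lies strictly between \<open>s / 2\<close> and \<open>2 s\<close>; otherwise \<open>s - i\<close> is hit
  by some \<open>i'\<close>, and the same argument applied to \<open>s - i\<close> gives \<open>i' = i\<close>.\<close>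
lemma pow2_pairing_top:
  assumes p: "pow2_pairing n p" and i: "s - n \<le> i" "i \<le> n"
  shows "p i = s - i"
proof -
  have into: "p j \<in> {1..n}" and pow2: "is_pow2 (j + p j)" if "j \<in> {1..n}" for j
    using p that by (auto simp: pow2_pairing_def bij_betw_def)
  show ?thesis
  proof (cases "s \<le> 2 * i")
    case True
    then have "i \<in> {1..n}" using i s by auto
    then have "p i \<in> {1..n}" "is_pow2 (i + p i)" by (rule into, rule pow2)
    moreover from this have "i + p i < 2 * s" "s < 2 * (i + p i)" using True s i by auto
    ultimately have "i + p i = s" using s by (intro is_pow2_eqI) auto
    then show ?thesis by simp
  next
    case False
    then have "s - i \<in> {1..n}" using i s by auto
    then have "s - i \<in> p ` {1..n}" using p by (simp add: pow2_pairing_def bij_betw_def)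
    then obtain i' where i': "i' \<in> {1..n}" "p i' = s - i" by auto
    then have "is_pow2 (i' + (s - i))" using pow2[OF i'(1)] by simp
    moreover have "i' + (s - i) < 2 * s" "s < 2 * (i' + (s - i))" using i' False s by auto
    ultimately have "i' + (s - i) = s" using s by (intro is_pow2_eqI) auto
    then have "i' = i" using i s by arith
    then show ?thesis using i' by simp
  qed
qed

lemma pow2_pairing_restrict:
  assumes p: "pow2_pairing n p"
  shows "pow2_pairing (s - n - 1) p"
proof -
  have inj: "inj_on p {1..n}" and into: "p ` {1..n} \<subseteq> {1..n}"
    using p by (auto simp: pow2_pairing_def bij_betw_def)
  have "p x \<in> {1..s - n - 1}" if x: "x \<in> {1..s - n - 1}" for x
  proof (rule ccontr)
    assume "p x \<notin> {1..s - n - 1}"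
    moreover have "x \<in> {1..n}" using x s by auto
    moreover from this have "p x \<in> {1..n}" using into by blast
    ultimately have "s - n \<le> p x" by auto
    then have "s - p x \<in> {1..n}" "s - n \<le> s - p x" using \<open>p x \<in> {1..n}\<close> s by auto
    then have "p (s - p x) = s - (s - p x)" by (intro pow2_pairing_top[OF p]) auto
    then have "p (s - p x) = p x" using \<open>p x \<in> {1..n}\<close> s by simp
    then have "s - p x = x"
      using inj \<open>x \<in> {1..n}\<close> \<open>s - p x \<in> {1..n}\<close> by (auto dest: inj_onD)
    then show False using x \<open>s - n \<le> p x\<close> \<open>p x \<in> {1..n}\<close> s by auto
  qed
  then have "p ` {1..s - n - 1} \<subseteq> {1..s - n - 1}" by blast
  moreover have "inj_on p {1..s - n - 1}" by (rule inj_on_subset[OF inj]) (use s in auto)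
  ultimately have "bij_betw p {1..s - n - 1} {1..s - n - 1}"
    by (simp add: bij_betw_def endo_inj_surj)
  then show ?thesis using p s by (auto simp: pow2_pairing_def)
qed

lemma pow2_pairing_extend:
  assumes q: "pow2_pairing (s - n - 1) q"
  shows "pow2_pairing n (\<lambda>i. if s - n \<le> i then s - i else q i)" (is "pow2_pairing n ?p")
proof -
  have "bij_betw ?p {1..s - n - 1} {1..s - n - 1} \<longleftrightarrow> bij_betw q {1..s - n - 1} {1..s - n - 1}"
    by (rule bij_betw_cong) auto
  then have low: "bij_betw ?p {1..s - n - 1} {1..s - n - 1}"
    using q by (simp add: pow2_pairing_def)
  have "s - i \<in> {s - n..n}" "s - (s - i) = i" if "i \<in> {s - n..n}" for i
    using that s by auto
  then have "bij_betw (\<lambda>i. s - i) {s - n..n} {s - n..n}"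
    by (intro bij_betw_byWitness[where f' = "\<lambda>i. s - i"]) auto
  moreover have "bij_betw ?p {s - n..n} {s - n..n} \<longleftrightarrow> bij_betw (\<lambda>i. s - i) {s - n..n} {s - n..n}"
    by (rule bij_betw_cong) simp
  ultimately have "bij_betw ?p ({1..s - n - 1} \<union> {s - n..n}) ({1..s - n - 1} \<union> {s - n..n})"
    using low by (intro bij_betw_combine) auto
  moreover have "{1..s - n - 1} \<union> {s - n..n} = {1..n}" using s by auto
  moreover have "is_pow2 (i + ?p i)" if i: "i \<in> {1..n}" for i
  proof (cases "s - n \<le> i")
    case True
    then show ?thesis using i s by simp
  next
    case False
    then have "i \<in> {1..s - n - 1}" using i by auto
    then show ?thesis using q False by (simp add: pow2_pairing_def)
  qed
  ultimately show ?thesis by (simp add: pow2_pairing_def)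
qed

end

lemma pow2_pairing_exists: "\<exists>p. pow2_pairing n p"
proof (induction n rule: less_induct)
  case (less n)
  show ?case
  proof (cases "n = 0")
    case True
    then show ?thesis by (auto simp: pow2_pairing_def)
  next
    case False
    then obtain s where s: "is_pow2 s" "s \<le> 2 * n" "n < s" by (rule pow2_block)
    moreover have "s - n - 1 < n" using s by arith
    ultimately obtain q where "pow2_pairing (s - n - 1) q" using less.IH by blast
    then show ?thesis using pow2_pairing_extend[OF s] by blast
  qed
qed

lemma pow2_pairing_unique:
  assumes "pow2_pairing n p" "pow2_pairing n q" "i \<in> {1..n}"
  shows "p i = q i"
  using assms
proof (induction n arbitrary: i rule: less_induct)
  case (less n)
  then have "n \<noteq> 0" by auto
  then obtain s where s: "is_pow2 s" "s \<le> 2 * n" "n < s" by (rule pow2_block)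
  show ?case
  proof (cases "s - n \<le> i")
    case True
    then show ?thesis
      using pow2_pairing_top[OF s less.prems(1)] pow2_pairing_top[OF s less.prems(2)] less.prems(3)
      by simp
  next
    case False
    then have "i \<in> {1..s - n - 1}" using less.prems(3) by auto
    moreover have "s - n - 1 < n" using s by arith
    ultimately show ?thesis
      using less.IH pow2_pairing_restrict[OF s less.prems(1)] pow2_pairing_restrict[OF s less.prems(2)]
      by blast
  qed
qed

lemma ex1_pow2_permutation: "\<exists>!p. p permutes {1..n} \<and> (\<forall>i\<in>{1..n}. is_pow2 (i + p i))"
proof -
  obtain p where p: "pow2_pairing n p" using pow2_pairing_exists by blast
  define p0 where "p0 i = (if i \<in> {1..n} then p i else i)" for i
  have "bij_betw p0 {1..n} {1..n} \<longleftrightarrow> bij_betw p {1..n} {1..n}"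
    by (rule bij_betw_cong) (simp add: p0_def)
  then have "p0 permutes {1..n}"
    using p by (intro bij_imp_permutes) (auto simp: pow2_pairing_def p0_def)
  moreover have "\<forall>i\<in>{1..n}. is_pow2 (i + p0 i)" using p by (simp add: pow2_pairing_def p0_def)
  moreover have "f = p0" if "f permutes {1..n}" "\<forall>i\<in>{1..n}. is_pow2 (i + f i)" for f
  proof
    fix i
    have "pow2_pairing n f" using that by (simp add: pow2_pairing_def permutes_imp_bij)
    then show "f i = p0 i"
      using pow2_pairing_unique[OF _ p] permutes_not_in[OF that(1)] by (auto simp: p0_def)
  qed
  ultimately show ?thesis by blast
qed

lemma permutes_pow2_transversal_iff:
  "(p permutes {0..<Suc n} \<and> (\<forall>i<Suc n. if i = 0 \<or> p i = 0 then i = p i else is_pow2 (i + p i)))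
    \<longleftrightarrow> (p permutes {1..n} \<and> (\<forall>i\<in>{1..n}. is_pow2 (i + p i)))"
proof
  assume "p permutes {0..<Suc n} \<and> (\<forall>i<Suc n. if i = 0 \<or> p i = 0 then i = p i else is_pow2 (i + p i))"
  then have p: "p permutes {0..<Suc n}"
    and cond: "\<And>i. i < Suc n \<Longrightarrow> if i = 0 \<or> p i = 0 then i = p i else is_pow2 (i + p i)"
    by blast+
  have "p 0 = 0" using cond[of 0] by simp
  have perm: "p permutes {1..n}"
  proof (rule permutes_superset[OF p])
    fix x assume "x \<in> {0..<Suc n} - {1..n}"
    then have "x = 0" by auto
    then show "p x = x" using \<open>p 0 = 0\<close> by simp
  qed
  have "is_pow2 (i + p i)" if i: "i \<in> {1..n}" for i
  proof -
    have "p i \<in> {1..n}" using permutes_in_image[OF perm] i by simp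
    then show ?thesis using cond[of i] i by simp
  qed
  with perm show "p permutes {1..n} \<and> (\<forall>i\<in>{1..n}. is_pow2 (i + p i))" by blast
next
  assume "p permutes {1..n} \<and> (\<forall>i\<in>{1..n}. is_pow2 (i + p i))"
  then have perm: "p permutes {1..n}" and pow2: "\<And>i. i \<in> {1..n} \<Longrightarrow> is_pow2 (i + p i)"
    by blast+
  have "if i = 0 \<or> p i = 0 then i = p i else is_pow2 (i + p i)" if i: "i < Suc n" for i
  proof (cases "i = 0")
    case True
    then show ?thesis using permutes_not_in[OF perm, of 0] by simp
  next
    case False
    then have "i \<in> {1..n}" using i by simp
    moreover from this have "p i \<in> {1..n}" using permutes_in_image[OF perm] by simp
    ultimately show ?thesis using pow2 by simp
  qed
  moreover have "p permutes {0..<Suc n}" by (rule permutes_subset[OF perm]) auto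
  ultimately show "p permutes {0..<Suc n} \<and> (\<forall>i<Suc n. if i = 0 \<or> p i = 0 then i = p i else is_pow2 (i + p i))"
    by blast
qed

section \<open>Determinants\<close>

lemma det_scale_rows_cols:
  fixes A B :: "'a :: comm_ring_1 mat"
  assumes A: "A \<in> carrier_mat m m" and B: "B \<in> carrier_mat m m"
    and entries: "\<And>i j. i < m \<Longrightarrow> j < m \<Longrightarrow> A $$ (i, j) = c i * c j * B $$ (i, j)"
  shows "det A = (\<Prod>i<m. c i) ^ 2 * det B"
proof -
  have "signof p * (\<Prod>i = 0..<m. A $$ (i, p i))
      = (\<Prod>i<m. c i) ^ 2 * (signof p * (\<Prod>i = 0..<m. B $$ (i, p i)))"
    if p: "p permutes {0..<m}" for p
  proof -
    have "(\<Prod>i = 0..<m. A $$ (i, p i)) = (\<Prod>i = 0..<m. c i) * (\<Prod>i = 0..<m. c (p i)) * (\<Prod>i = 0..<m. B $$ (i, p i))"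
      using permutes_in_image[OF p] by (simp add: entries prod.distrib)
    also have "(\<Prod>i = 0..<m. c (p i)) = (\<Prod>i = 0..<m. c i)"
      using prod.permute[OF p, of c] by (simp add: comp_def)
    finally show ?thesis by (simp add: power2_eq_square atLeast0LessThan algebra_simps)
  qed
  then show ?thesis
    unfolding det_def'[OF A] det_def'[OF B] by (simp add: sum_distrib_left)
qed

lemma odd_det_iff_odd_card:
  fixes A :: "int mat"
  assumes A: "A \<in> carrier_mat m m"
  shows "odd (det A) \<longleftrightarrow> odd (card {p. p permutes {0..<m} \<and> (\<forall>i<m. odd (A $$ (i, p i)))})"
proof -
  have "odd (signof p * (\<Prod>i = 0..<m. A $$ (i, p i))) \<longleftrightarrow> (\<forall>i<m. odd (A $$ (i, p i)))" for p
    by (cases p rule: sign_cases) (simp_all add: even_prod_iff atLeast0LessThan Ball_def)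
  then have "{p \<in> {p. p permutes {0..<m}}. odd (signof p * (\<Prod>i = 0..<m. A $$ (i, p i)))}
      = {p. p permutes {0..<m} \<and> (\<forall>i<m. odd (A $$ (i, p i)))}"
    by auto
  then show ?thesis
    unfolding det_def'[OF A] by (simp add: even_sum_iff finite_permutations)
qed

text \<open>With \<open>v\<close> the last column of the adjugate, \<open>A v = det A e\<^sub>n\<close> and \<open>v\<^sub>n\<close> is the
  cofactor \<open>det A'\<close>, so the quadratic form at \<open>v\<close> equals \<open>det A' det A\<close>.\<close>
lemma det_mat_delete_mult_nonneg:
  fixes A :: "'a :: linordered_idom mat"
  assumes A: "A \<in> carrier_mat (Suc n) (Suc n)"
    and psd: "\<And>v. 0 \<le> (\<Sum>i<Suc n. \<Sum>k<Suc n. v i * v k * A $$ (i, k))"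
  shows "0 \<le> det (mat_delete A n n) * det A"
proof -
  define v where "v k = cofactor A n k" for k
  have adj: "(\<Sum>k<Suc n. A $$ (i, k) * v k) = (if i = n then det A else 0)" if "i < Suc n" for i
  proof -
    have "(\<Sum>k<Suc n. A $$ (i, k) * v k) = (A * adj_mat A) $$ (i, n)"
      using A adj_mat(1)[OF A] that
      by (simp add: scalar_prod_def lessThan_atLeast0 adj_mat_def v_def)
    also have "\<dots> = (if i = n then det A else 0)" using adj_mat(2)[OF A] that by simp
    finally show ?thesis .
  qed
  have "(\<Sum>i<Suc n. \<Sum>k<Suc n. v i * v k * A $$ (i, k)) = (\<Sum>i<Suc n. v i * (\<Sum>k<Suc n. A $$ (i, k) * v k))"
    by (simp add: sum_distrib_left algebra_simps)
  also have "\<dots> = (\<Sum>i<Suc n. if i = n then v i * det A else 0)"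
    by (intro sum.cong refl) (simp only: lessThan_iff adj, simp)
  also have "\<dots> = v n * det A" by (simp only: sum.delta finite_lessThan) simp
  also have "v n = det (mat_delete A n n)" by (simp add: v_def cofactor_def)
  finally show ?thesis using psd[of v] by simp
qed

lemma hankel_carrier: "hankel a n \<in> carrier_mat (Suc n) (Suc n)"
  by (simp add: hankel_def)

lemma hankel_index: "i < Suc n \<Longrightarrow> j < Suc n \<Longrightarrow> hankel a n $$ (i, j) = a (i + j)"
  by (simp add: hankel_def)

lemma mat_delete_hankel: "mat_delete (hankel a (Suc n)) (Suc n) (Suc n) = hankel a n"
  by (rule eq_matI) (auto simp: mat_delete_def hankel_def)

lemma hankel_det_pos:
  fixes a :: "nat \<Rightarrow> int"
  assumes psd: "\<And>n v. 0 \<le> (\<Sum>i<Suc n. \<Sum>k<Suc n. v i * v k * a (i + k))"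
    and nonzero: "\<And>n. det (hankel a n) \<noteq> 0"
  shows "0 < det (hankel a n)"
proof (induction n)
  case 0
  have "hankel a 0 \<in> carrier_mat 1 1" using hankel_carrier[of a 0] by simp
  then have "det (hankel a 0) = a 0" by (simp add: det_single hankel_index)
  moreover have "0 \<le> a 0" using psd[where n = 0 and v = "\<lambda>_. 1"] by simp
  ultimately show ?case using nonzero[of 0] by simp
next
  case (Suc n)
  have "0 \<le> det (mat_delete (hankel a (Suc n)) (Suc n) (Suc n)) * det (hankel a (Suc n))"
  proof (rule det_mat_delete_mult_nonneg[OF hankel_carrier])
    fix v :: "nat \<Rightarrow> int"
    have "(\<Sum>i<Suc (Suc n). \<Sum>k<Suc (Suc n). v i * v k * hankel a (Suc n) $$ (i, k))
        = (\<Sum>i<Suc (Suc n). \<Sum>k<Suc (Suc n). v i * v k * a (i + k))"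
      by (intro sum.cong refl) (simp only: lessThan_iff hankel_index)
    then show "0 \<le> (\<Sum>i<Suc (Suc n). \<Sum>k<Suc (Suc n). v i * v k * hankel a (Suc n) $$ (i, k))"
      using psd[where n = "Suc n" and v = v] by (simp only:)
  qed
  then have "0 \<le> det (hankel a n) * det (hankel a (Suc n))" by (simp only: mat_delete_hankel)
  then show ?case using Suc.IH nonzero[of "Suc n"] by (simp add: zero_le_mult_iff)
qed

section \<open>D1 as a moment sequence\<close>

lemma moment_form_nonneg:
  fixes t w :: "'b \<Rightarrow> real" and v :: "nat \<Rightarrow> real"
  assumes "\<And>x. x \<in> S \<Longrightarrow> 0 \<le> w x"
  shows "0 \<le> (\<Sum>i<m. \<Sum>k<m. v i * v k * (\<Sum>x\<in>S. w x * t x ^ (i + k)))"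
proof -
  have "(\<Sum>i<m. \<Sum>k<m. v i * v k * (\<Sum>x\<in>S. w x * t x ^ (i + k)))
      = (\<Sum>i<m. \<Sum>k<m. \<Sum>x\<in>S. w x * ((v i * t x ^ i) * (v k * t x ^ k)))"
    by (simp add: sum_distrib_left power_add algebra_simps)
  also have "\<dots> = (\<Sum>x\<in>S. \<Sum>i<m. \<Sum>k<m. w x * ((v i * t x ^ i) * (v k * t x ^ k)))"
    by (simp only: sum.swap[of _ S])
  also have "\<dots> = (\<Sum>x\<in>S. w x * (\<Sum>i<m. \<Sum>k<m. (v i * t x ^ i) * (v k * t x ^ k)))"
    by (simp only: sum_distrib_left)
  also have "\<dots> = (\<Sum>x\<in>S. w x * ((\<Sum>i<m. v i * t x ^ i) * (\<Sum>k<m. v k * t x ^ k)))"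
    by (simp only: sum_product)
  also have "\<dots> = (\<Sum>x\<in>S. w x * (\<Sum>i<m. v i * t x ^ i)\<^sup>2)"
    by (simp only: power2_eq_square)
  finally show ?thesis using assms by (simp add: sum_nonneg)
qed

lemma sum_root_unity_power_cnj:
  assumes "a < N" "b < N"
  shows "(\<Sum>j<N. cis (2 * pi * real j / real N) ^ a * cnj (cis (2 * pi * real j / real N)) ^ b)
    = (if a = b then of_nat N else 0)"
proof -
  define \<omega> where "\<omega> = cis (2 * pi * (real a - real b) / N)"
  have "cis (2 * pi * real j / real N) ^ a * cnj (cis (2 * pi * real j / real N)) ^ b = \<omega> ^ j" for j :: nat
  proof -
    have "cis (2 * pi * real j / real N) ^ a * cnj (cis (2 * pi * real j / real N)) ^ b
        = cis (real a * (2 * pi * j / N) - real b * (2 * pi * j / N))"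
      by (simp add: cis_cnj DeMoivre cis_mult)
    also have "real a * (2 * pi * j / N) - real b * (2 * pi * j / N) = real j * (2 * pi * (real a - real b) / N)"
      using assms by (simp add: field_simps)
    finally show ?thesis by (simp add: \<omega>_def DeMoivre)
  qed
  moreover have "(\<Sum>j<N. \<omega> ^ j) = 0" if "a \<noteq> b"
  proof -
    have "\<omega> \<noteq> 1"
    proof
      assume "\<omega> = 1"
      then obtain k :: int where "2 * pi * (real a - real b) / N = k * 2 * pi"
        by (auto simp: \<omega>_def complex_eq_iff cos_one_2pi_int)
      then have "pi * (2 * (real a - real b)) = pi * (2 * (k * real N))"
        using assms by (simp add: field_simps)
      then have "real_of_int (int a - int b) = real_of_int (k * int N)" by simp
      then have k: "int a - int b = k * int N" by (simp only: of_int_eq_iff)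
      then have "k \<noteq> 0" using that by auto
      then have "1 * int N \<le> \<bar>k\<bar> * int N" by (intro mult_right_mono) auto
      moreover have "\<bar>int a - int b\<bar> < int N" using assms by auto
      ultimately show False using k by (simp add: abs_mult)
    qed
    moreover have "\<omega> ^ N = 1" using assms by (simp add: \<omega>_def DeMoivre)
    ultimately show ?thesis by (simp add: sum_gp_strict)
  qed
  ultimately show ?thesis by (simp add: \<omega>_def)
qed

definition chord_sq :: "nat \<Rightarrow> nat \<Rightarrow> real" where
  "chord_sq N j = (cmod (1 + cis (2 * pi * real j / real N)))\<^sup>2"

lemma sum_chord_sq_power:
  assumes "k < N"
  shows "(\<Sum>j<N. chord_sq N j ^ k) = real N * real ((2 * k) choose k)"
proof -
  let ?w = "\<lambda>j. cis (2 * pi * real j / real N)"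
  have "complex_of_real (chord_sq N j ^ k)
      = (\<Sum>a\<le>k. \<Sum>b\<le>k. of_nat (k choose a) * of_nat (k choose b) * (?w j ^ a * cnj (?w j) ^ b))" for j
  proof -
    have "complex_of_real (chord_sq N j) = (1 + ?w j) * cnj (1 + ?w j)"
      unfolding chord_sq_def by (rule complex_norm_square)
    then have "complex_of_real (chord_sq N j) = (?w j + 1) * (cnj (?w j) + 1)"
      by (simp add: algebra_simps)
    then have "complex_of_real (chord_sq N j ^ k) = (?w j + 1) ^ k * (cnj (?w j) + 1) ^ k"
      by (simp add: power_mult_distrib)
    then show ?thesis
      unfolding binomial_ring by (simp add: sum_product algebra_simps)
  qed
  then have "complex_of_real (\<Sum>j<N. chord_sq N j ^ k)
      = (\<Sum>a\<le>k. \<Sum>b\<le>k. of_nat (k choose a) * of_nat (k choose b) * (\<Sum>j<N. ?w j ^ a * cnj (?w j) ^ b))"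
    by (simp add: sum.swap[of _ "{..<N}"] sum_distrib_left)
  also have "\<dots> = (\<Sum>a\<le>k. of_nat ((k choose a)\<^sup>2) * of_nat N)"
    using assms by (simp add: sum_root_unity_power_cnj if_distrib power2_eq_square sum.delta cong: if_cong)
  also have "\<dots> = of_nat ((\<Sum>a\<le>k. (k choose a)\<^sup>2) * N)"
    by (simp add: sum_distrib_right)
  also have "\<dots> = complex_of_real (real N * real ((2 * k) choose k))"
    by (simp only: choose_square_sum) simp
  finally show ?thesis by (simp only: of_real_eq_iff)
qed

lemma D1_moment:
  assumes "m < N"
  shows "real N ^ 2 * real_of_int (D1 m) = (\<Sum>j<N. \<Sum>l<N. (chord_sq N j + chord_sq N l) ^ m)"
proof -
  have "real N ^ 2 * real_of_int (D1 m)
      = (\<Sum>k=0..m. real (m choose k) * (real N * real ((2 * k) choose k)) * (real N * real ((2 * (m - k)) choose (m - k))))"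
    by (simp add: D1_def sum_distrib_left algebra_simps power2_eq_square)
  also have "\<dots> = (\<Sum>k=0..m. real (m choose k) * (\<Sum>j<N. chord_sq N j ^ k) * (\<Sum>l<N. chord_sq N l ^ (m - k)))"
    using assms by (intro sum.cong refl) (simp add: sum_chord_sq_power)
  also have "\<dots> = (\<Sum>k=0..m. \<Sum>j<N. \<Sum>l<N. real (m choose k) * chord_sq N j ^ k * chord_sq N l ^ (m - k))"
  proof (intro sum.cong refl)
    fix k
    show "real (m choose k) * (\<Sum>j<N. chord_sq N j ^ k) * (\<Sum>l<N. chord_sq N l ^ (m - k))
        = (\<Sum>j<N. \<Sum>l<N. real (m choose k) * chord_sq N j ^ k * chord_sq N l ^ (m - k))"
      unfolding sum_distrib_left[of "real (m choose k)"] sum_product ..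
  qed
  also have "\<dots> = (\<Sum>j<N. \<Sum>l<N. \<Sum>k=0..m. real (m choose k) * chord_sq N j ^ k * chord_sq N l ^ (m - k))"
    by (subst sum.swap) (simp add: sum.swap[of _ "{0..m}"])
  also have "\<dots> = (\<Sum>j<N. \<Sum>l<N. (chord_sq N j + chord_sq N l) ^ m)"
    by (simp add: binomial_ring atLeast0AtMost)
  finally show ?thesis .
qed

lemma D1_form_nonneg:
  fixes v :: "nat \<Rightarrow> int"
  shows "0 \<le> (\<Sum>i<Suc n. \<Sum>k<Suc n. v i * v k * D1 (i + k))"
proof -
  define N where "N = 2 * n + 1"
  let ?t = "\<lambda>x. chord_sq N (fst x) + chord_sq N (snd x)"
  have moment: "real N ^ 2 * real_of_int (D1 (i + k)) = (\<Sum>x\<in>{..<N} \<times> {..<N}. 1 * ?t x ^ (i + k))"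
    if "i < Suc n" "k < Suc n" for i k
  proof -
    have "i + k < N" using that by (simp add: N_def)
    then show ?thesis by (simp add: D1_moment sum.cartesian_product case_prod_beta)
  qed
  have "real N ^ 2 * real_of_int (\<Sum>i<Suc n. \<Sum>k<Suc n. v i * v k * D1 (i + k))
      = (\<Sum>i<Suc n. \<Sum>k<Suc n. real_of_int (v i) * real_of_int (v k) * (real N ^ 2 * real_of_int (D1 (i + k))))"
    by (simp add: sum_distrib_left algebra_simps)
  also have "\<dots> = (\<Sum>i<Suc n. \<Sum>k<Suc n. real_of_int (v i) * real_of_int (v k)
      * (\<Sum>x\<in>{..<N} \<times> {..<N}. 1 * ?t x ^ (i + k)))"
    by (intro sum.cong refl) (simp add: moment)
  also have "\<dots> \<ge> 0" by (rule moment_form_nonneg) simp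
  finally have "0 \<le> real N ^ 2 * real_of_int (\<Sum>i<Suc n. \<Sum>k<Suc n. v i * v k * D1 (i + k))" .
  moreover have "0 \<le> x" if "0 \<le> real N ^ 2 * real_of_int x" for x :: int
    using that by (simp add: N_def zero_le_mult_iff)
  ultimately show ?thesis by blast
qed

section \<open>The Hankel determinants of D1\<close>

definition hankel_weight :: "nat \<Rightarrow> int" where
  "hankel_weight i = (if i = 0 then 1 else 2)"

lemma D1_reduced_entry:
  "hankel_weight i * hankel_weight j dvd D1 (i + j)"
  "odd (D1 (i + j) div (hankel_weight i * hankel_weight j))
    \<longleftrightarrow> (if i = 0 \<or> j = 0 then i = j else is_pow2 (i + j))"
proof -
  consider "i = 0" "j = 0" | "i + j \<noteq> 0" "i = 0 \<or> j = 0" | "i \<noteq> 0" "j \<noteq> 0" by auto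
  then have "hankel_weight i * hankel_weight j dvd D1 (i + j) \<and>
    (odd (D1 (i + j) div (hankel_weight i * hankel_weight j))
      \<longleftrightarrow> (if i = 0 \<or> j = 0 then i = j else is_pow2 (i + j)))"
  proof cases
    case 1
    then show ?thesis by (simp add: hankel_weight_def D1_def)
  next
    case 2
    then obtain e where e: "D1 (i + j) = 4 * int e" by (metis D1_quarter_parity)
    have "hankel_weight i * hankel_weight j = 2" "i \<noteq> j"
      using 2 by (auto simp: hankel_weight_def)
    then show ?thesis using 2 by (simp add: e)
  next
    case 3
    then have "i + j \<noteq> 0" by simp
    then obtain e where e: "D1 (i + j) = 4 * int e" "odd e \<longleftrightarrow> is_pow2 (i + j)"
      by (rule D1_quarter_parity)
    have "hankel_weight i * hankel_weight j = 4" using 3 by (simp add: hankel_weight_def)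
    then show ?thesis using 3 e by simp
  qed
  then show "hankel_weight i * hankel_weight j dvd D1 (i + j)"
    "odd (D1 (i + j) div (hankel_weight i * hankel_weight j))
      \<longleftrightarrow> (if i = 0 \<or> j = 0 then i = j else is_pow2 (i + j))"
    by simp_all
qed

lemma hankel_D1_det_factor: "\<exists>q. det (hankel D1 n) = 4 ^ n * q \<and> odd q"
proof -
  define B where "B = mat (Suc n) (Suc n) (\<lambda>(i, j). D1 (i + j) div (hankel_weight i * hankel_weight j))"
  have B: "B \<in> carrier_mat (Suc n) (Suc n)" by (simp add: B_def)
  have "det (hankel D1 n) = (\<Prod>i<Suc n. hankel_weight i) ^ 2 * det B"
  proof (rule det_scale_rows_cols[OF hankel_carrier B])
    fix i j assume "i < Suc n" "j < Suc n"
    then show "hankel D1 n $$ (i, j) = hankel_weight i * hankel_weight j * B $$ (i, j)"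
      by (simp add: B_def hankel_index dvd_mult_div_cancel[OF D1_reduced_entry(1)])
  qed
  also have "(\<Prod>i<Suc n. hankel_weight i) = 2 ^ n"
    by (simp only: prod.lessThan_Suc_shift) (simp add: hankel_weight_def)
  finally have "det (hankel D1 n) = 4 ^ n * det B"
    by (simp add: power2_eq_square power_mult_distrib[symmetric])
  moreover have "odd (det B)"
  proof -
    have parity: "odd (B $$ (i, p i)) \<longleftrightarrow> (if i = 0 \<or> p i = 0 then i = p i else is_pow2 (i + p i))"
      if "p permutes {0..<Suc n}" "i < Suc n" for p i
      using that permutes_in_image[OF that(1), of i] by (simp add: B_def D1_reduced_entry(2))
    have "{p. p permutes {0..<Suc n} \<and> (\<forall>i<Suc n. odd (B $$ (i, p i)))}
        = {p. p permutes {1..n} \<and> (\<forall>i\<in>{1..n}. is_pow2 (i + p i))}"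
    proof (intro Collect_cong)
      fix p
      have "(p permutes {0..<Suc n} \<and> (\<forall>i<Suc n. odd (B $$ (i, p i))))
          \<longleftrightarrow> (p permutes {0..<Suc n} \<and> (\<forall>i<Suc n. if i = 0 \<or> p i = 0 then i = p i else is_pow2 (i + p i)))"
        by (rule conj_cong) (simp_all add: parity)
      then show "(p permutes {0..<Suc n} \<and> (\<forall>i<Suc n. odd (B $$ (i, p i))))
          \<longleftrightarrow> (p permutes {1..n} \<and> (\<forall>i\<in>{1..n}. is_pow2 (i + p i)))"
        by (simp only: permutes_pow2_transversal_iff)
    qed
    also obtain p0 where "\<dots> = {p0}"
      using ex1_pow2_permutation[of n] by auto
    finally show ?thesis by (simp add: odd_det_iff_odd_card[OF B])
  qed
  ultimately show ?thesis by blast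
qed

theorem mainTheorem9:
  fixes n :: nat
  shows "\<exists>q::int. det (hankel D1 n) = 4 ^ n * q \<and> q > 0 \<and> odd q"
proof -
  have "0 < det (hankel D1 n)"
  proof (rule hankel_det_pos)
    show "0 \<le> (\<Sum>i<Suc m. \<Sum>k<Suc m. v i * v k * D1 (i + k))" for m v
      by (rule D1_form_nonneg)
    show "det (hankel D1 m) \<noteq> 0" for m
      using hankel_D1_det_factor[of m] by auto
  qed
  then show ?thesis using hankel_D1_det_factor[of n] by (auto simp: zero_less_mult_iff)
qed

end
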